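(* Assume all hypotheses of the setting below. Let $\tilde y\in\mathbb{R}^d$ satisfy $\|\nabla g(\tilde y)\|\le\varepsilon_1$ and $\lambda_{\min}(\nabla^2g(\tilde y))\le-\varepsilon_2$, and let $e_0$ be a unit eigenvector of $\nabla^2 g(\tilde y)$ for its smallest eigenvalue. Let $y_0,y_0'\in\mathbb{R}^d$ satisfy $y_0=y_0'+\eta r_0e_0$ and $\max\{\|y_0-\tilde y\|,\|y_0'-\tilde y\|\}\le\eta r$, where $r_0\ge\omega:=\frac1\eta2^{3-\gamma}R$. Define $y_{t+1}=y_t-\eta G(y_t)$ and $y'_{t+1}=y'_t-\eta G(y'_t)$. Then $$\min\{g(y_M)-g(y_0),\ g(y_M')-g(y_0')\}\le-F.$$
   Context: Setting: $g\colon\mathbb{R}^d\to\mathbb{R}$ is bounded below with $L_1$-Lipschitz gradient, and there are $\alpha,\beta,L_2>0$ such that for every $\bar x$ with $\|\nabla g(\bar x)\|\le\alpha$, $g$ is $C^2$ on $\mathbb{B}_\beta(\bar x)$ with $L_2$-Lipschitz Hessian there. $G$ is an $(a,b)$-inexact gradient oracle for $g$, i.e. $\|\nabla g(x)-G(x)\|\le a\|\nabla g(x)\|+b$ for all $x$. Fix $\Delta_g>0$ (an upper bound on $g(x_0)-\inf g$ for a reference point $x_0$), $\delta\in(0,1)$, $\varepsilon_1\in(0,\alpha)$, and define $\phi:=2^{24}\max\{1,5\frac{L_2\varepsilon_1}{L_1\varepsilon_2}\}\frac{L_1^2}{\delta}\sqrt d(\Delta_g\max\{\frac{L_2^2}{\varepsilon_2^5},\frac{1}{\varepsilon_1^2\varepsilon_2}\}+\frac1{\varepsilon_2^2})$,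 $\gamma:=\log_2(\phi(\log_2\phi)^8)$, $F:=\frac{1}{800\gamma^3}\frac{1-a}{(1+a)^2}\frac{\varepsilon_2^3}{L_2^2}$, $R:=\frac{\varepsilon_2}{4\gamma L_2}$, $\eta:=\frac{1-a}{(1+a)^2L_1}$, $r:=\frac{\varepsilon_2^2}{400L_2\gamma^3}\min\{1,\frac{L_1\varepsilon_2}{5\varepsilon_1L_2}\}$, $M:=\frac{(1+a)^2}{1-a}\frac{L_1\gamma}{\varepsilon_2}$ (treated as a positive integer). Assume $\varepsilon_2\in(0,\min\{4\gamma\beta L_2,L_1,L_1^2\})$, $a\le\min\{\frac1{20},\frac{1}{L_1\eta M2^{\gamma+2}},\frac{R}{\varepsilon_1\eta M2^{\gamma+2}}\}$ and $b\le\min\{\frac{\varepsilon_1}{64},(\frac{F}{40\eta M})^{1/2},(\frac{L_1F}{M(5L_1+1)})^{1/2},\frac{R}{M\eta2^{\gamma+2}}\}$. *)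

theory Defs
  imports "HOL-Analysis.Analysis"
begin

text \<open>Real eigenvalues of a square matrix, and the smallest one
  (for the symmetric Hessians considered here all eigenvalues are real and
  this set is finite and nonempty, so the infimum is the minimum).\<close>

definition real_eigenvalues :: "real^'n^'n \<Rightarrow> real set" where
  "real_eigenvalues A = {c. \<exists>v. v \<noteq> 0 \<and> A *v v = c *\<^sub>R v}"

definition lambda_min :: "real^'n^'n \<Rightarrow> real" where
  "lambda_min A = Inf (real_eigenvalues A)"

end

theory Submission
  imports Defs
begin

(*
  Suppose neither run decreases g by F within M steps. Summing the descent inequality of the
  inexact gradient steps bounds the total squared gradient norm along each run, hence its length,
  so both runs stay in the ball of radius R around the saddle point, where the Hessian differs
  from H = hess ytil by at most L2 * R. The difference of the two runs therefore evolves like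
  w |-> (I - eta H) w up to small linearization and oracle errors. Its component along the bottom
  eigenvector e0 grows by the factor 1 - eta lambda_min(H) >= 1 + eta eps2 in every step, so after
  M steps it exceeds the diameter 2 R of the ball, a contradiction.
*)

section \<open>Calculus with Lipschitz gradient and Hessian\<close>

lemma has_derivative_norm_le_lipschitz:
  fixes f :: "'a::real_normed_vector \<Rightarrow> 'b::real_normed_vector"
  assumes d: "(f has_derivative f') (at x)" and lip: "\<And>y. norm (f y - f x) \<le> L * norm (y - x)"
  shows "norm (f' h) \<le> L * norm h"
proof -
  have bl: "bounded_linear f'" using d by (simp add: has_derivative_at_alt)
  hence lin: "linear f'" by (rule bounded_linear.linear)
  show ?thesis
  proof (cases "h = 0")
    case True
    then show ?thesis using lin linear_0 by auto
  next
    case False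
    show ?thesis
    proof (rule field_le_epsilon)
      fix e :: real assume e0: "e > 0"
      hence "e / norm h > 0" using False by simp
      then obtain d where d0: "d > 0" and dd: "\<forall>y. norm (y - x) < d \<longrightarrow> norm (f y - f x - f' (y - x)) \<le> (e / norm h) * norm (y - x)"
        using d unfolding has_derivative_at_alt by blast
      define c where "c = d / (2 * norm h)"
      have c0: "c > 0" using d0 False by (simp add: c_def)
      have ny: "norm ((x + c *\<^sub>R h) - x) = c * norm h" using c0 by simp
      have "c * norm h < d" using d0 False by (simp add: c_def)
      hence le: "norm (f (x + c *\<^sub>R h) - f x - f' (c *\<^sub>R h)) \<le> (e / norm h) * (c * norm h)"
        using dd[rule_format, of "x + c *\<^sub>R h"] ny c0 False by simp
      have le2: "(e / norm h) * (c * norm h) = e * c" using False by simp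
      have fc: "f' (c *\<^sub>R h) = c *\<^sub>R f' h" using lin by (simp add: linear_scale)
      have "c * norm (f' h) = norm (f' (c *\<^sub>R h))" using c0 fc by simp
      also have "\<dots> \<le> norm (f (x + c *\<^sub>R h) - f x) + norm (f (x + c *\<^sub>R h) - f x - f' (c *\<^sub>R h))"
        by (metis norm_minus_commute norm_triangle_sub)
      also have "\<dots> \<le> L * (c * norm h) + e * c"
        using lip[of "x + c *\<^sub>R h"] ny le le2 c0 False by simp
      finally have "c * norm (f' h) \<le> c * (L * norm h + e)" by (simp add: algebra_simps)
      thus "norm (f' h) \<le> L * norm h + e" using c0 by simp
    qed
  qed
qed

lemma lipschitz_gradient_quadratic_bound:
  fixes g :: "'a::real_inner \<Rightarrow> real"
  assumes grad: "\<And>x. (g has_derivative (\<lambda>h. grad x \<bullet> h)) (at x)"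
   and lip: "\<And>x z. norm (grad x - grad z) \<le> L * norm (x - z)"
  shows "g (x + h) \<le> g x + grad x \<bullet> h + L/2 * (norm h)^2"
proof -
  define \<phi> where "\<phi> t = g (x + t *\<^sub>R h) - t * (grad x \<bullet> h) - L/2 * t^2 * (norm h)^2" for t
  have D: "DERIV \<phi> t :> (grad (x + t *\<^sub>R h) \<bullet> h - grad x \<bullet> h - L * t * (norm h)^2)" for t
  proof -
    have "((\<lambda>t. x + t *\<^sub>R h) has_derivative (\<lambda>s. s *\<^sub>R h)) (at t)"
      by (auto intro!: derivative_eq_intros)
    from has_derivative_compose[OF this grad]
    have "((\<lambda>t. g (x + t *\<^sub>R h)) has_derivative (\<lambda>s. grad (x + t *\<^sub>R h) \<bullet> (s *\<^sub>R h))) (at t)" .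
    hence "((\<lambda>t. g (x + t *\<^sub>R h)) has_derivative (\<lambda>s. (grad (x + t *\<^sub>R h) \<bullet> h) * s)) (at t)"
      by (simp add: mult.commute)
    hence g1: "DERIV (\<lambda>t. g (x + t *\<^sub>R h)) t :> grad (x + t *\<^sub>R h) \<bullet> h"
      by (simp add: has_field_derivative_def)
    show ?thesis unfolding \<phi>_def
      by (rule derivative_eq_intros g1 | simp)+
  qed
  have "\<phi> 1 \<le> \<phi> 0"
  proof (rule DERIV_nonpos_imp_nonincreasing[of 0 1])
    fix t :: real assume t: "0 \<le> t" "t \<le> 1"
    have "grad (x + t *\<^sub>R h) \<bullet> h - grad x \<bullet> h = (grad (x + t *\<^sub>R h) - grad x) \<bullet> h"
      by (simp add: inner_diff_left)
    also have "\<dots> \<le> norm (grad (x + t *\<^sub>R h) - grad x) * norm h" by (rule norm_cauchy_schwarz)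
    also have "\<dots> \<le> L * (t * norm h) * norm h"
      using lip[of "x + t *\<^sub>R h" x] t by (intro mult_right_mono) auto
    finally have "grad (x + t *\<^sub>R h) \<bullet> h - grad x \<bullet> h - L * t * (norm h)^2 \<le> 0"
      by (simp add: power2_eq_square algebra_simps)
    thus "\<exists>y. DERIV \<phi> t :> y \<and> y \<le> 0" using D by blast
  qed simp
  thus ?thesis unfolding \<phi>_def by simp
qed

lemma gradient_linearization_error:
  fixes grad :: "real^'n \<Rightarrow> real^'n" and hess :: "real^'n \<Rightarrow> real^'n^'n"
  assumes hd: "\<And>z. z \<in> cball x0 \<beta> \<Longrightarrow> (grad has_derivative (\<lambda>h. hess z *v h)) (at z within cball x0 \<beta>)"
   and lip: "\<And>z. z \<in> cball x0 \<beta> \<Longrightarrow> onorm (\<lambda>h. (hess z - hess x0) *v h) \<le> L2 * norm (z - x0)"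
   and L2: "L2 \<ge> 0" and \<rho>: "0 \<le> \<rho>" "\<rho> \<le> \<beta>" and y: "y \<in> cball x0 \<rho>" and y': "y' \<in> cball x0 \<rho>"
  shows "norm (grad y - grad y' - hess x0 *v (y - y')) \<le> L2 * \<rho> * norm (y - y')"
proof -
  have sub: "cball x0 \<rho> \<subseteq> cball x0 \<beta>" using \<rho> by auto
  have "norm (grad y - grad y' - (\<lambda>h. hess x0 *v h) (y - y')) \<le> norm (y - y') * (L2 * \<rho>)"
  proof (rule differentiable_bound_linearization[where S="cball x0 \<rho>" and f'="\<lambda>z h. hess z *v h"])
    fix t :: real assume t: "t \<in> {0..1}"
    have "y' + t *\<^sub>R (y - y') = (1 - t) *\<^sub>R y' + t *\<^sub>R y" by (simp add: algebra_simps)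
    also have "\<dots> \<in> cball x0 \<rho>" using t y y' convex_cball[of x0 \<rho>] unfolding convex_def by auto
    finally show "y' + t *\<^sub>R (y - y') \<in> cball x0 \<rho>" .
  next
    fix z assume z: "z \<in> cball x0 \<rho>"
    show "(grad has_derivative (\<lambda>h. hess z *v h)) (at z within cball x0 \<rho>)"
      using has_derivative_subset[OF hd[of z] sub] z sub by blast
  next
    fix z assume z: "z \<in> cball x0 \<rho>"
    have "(\<lambda>h. hess z *v h) - (\<lambda>h. hess x0 *v h) = (\<lambda>h. (hess z - hess x0) *v h)"
      by (rule ext) (simp add: matrix_vector_mult_diff_rdistrib)
    moreover have "onorm (\<lambda>h. (hess z - hess x0) *v h) \<le> L2 * \<rho>"
    proof -
      have "norm (z - x0) \<le> \<rho>" using z by (simp add: dist_norm norm_minus_commute)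
      from mult_left_mono[OF this L2] show ?thesis using lip[of z] sub z by (meson order_trans subsetD)
    qed
    ultimately show "onorm ((\<lambda>h. hess z *v h) - (\<lambda>h. hess x0 *v h)) \<le> L2 * \<rho>" by simp
  next
    show "x0 \<in> cball x0 \<rho>" using \<rho> by simp
  qed
  thus ?thesis by (simp add: mult.commute)
qed

lemma onorm_inner_le_norm: "onorm (\<lambda>v. a \<bullet> v) \<le> norm a"
  by (rule onorm_bound) (simp_all add: Cauchy_Schwarz_ineq2)

lemma second_difference_hessian_error:
  fixes g :: "real^'n \<Rightarrow> real" and grad :: "real^'n \<Rightarrow> real^'n" and hess :: "real^'n \<Rightarrow> real^'n^'n"
  assumes grad: "\<And>x. (g has_derivative (\<lambda>h. grad x \<bullet> h)) (at x)"
   and hd: "\<And>z. z \<in> cball x0 \<beta> \<Longrightarrow> (grad has_derivative (\<lambda>h. hess z *v h)) (at z within cball x0 \<beta>)"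
   and lip: "\<And>z. z \<in> cball x0 \<beta> \<Longrightarrow> onorm (\<lambda>h. (hess z - hess x0) *v h) \<le> L2 * norm (z - x0)"
   and L2: "L2 \<ge> 0" and r: "0 \<le> r" "2 * r \<le> \<beta>" and p: "norm p \<le> r" and q: "norm q \<le> r"
  shows "\<bar>g (x0 + p + q) - g (x0 + p) - g (x0 + q) + g x0 - (hess x0 *v q) \<bullet> p\<bar> \<le> L2 * (2 * r) * norm q * norm p"
proof -
  define \<psi> where "\<psi> z = g (z + q) - g z - (hess x0 *v q) \<bullet> z" for z
  have der: "(\<psi> has_derivative (\<lambda>v. (grad (z + q) - grad z - hess x0 *v q) \<bullet> v)) (at z within cball x0 r)" for z
  proof -
    have "((\<lambda>z. z + q) has_derivative (\<lambda>v. v)) (at z)" by (auto intro!: derivative_eq_intros)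
    from has_derivative_compose[OF this grad]
    have a: "((\<lambda>z. g (z + q)) has_derivative (\<lambda>v. grad (z + q) \<bullet> v)) (at z)" .
    have b: "((\<lambda>z. (hess x0 *v q) \<bullet> z) has_derivative (\<lambda>v. (hess x0 *v q) \<bullet> v)) (at z)"
      by (auto intro!: derivative_eq_intros)
    have "(\<psi> has_derivative (\<lambda>v. grad (z + q) \<bullet> v - grad z \<bullet> v - (hess x0 *v q) \<bullet> v)) (at z)"
      unfolding \<psi>_def by (intro has_derivative_diff a b grad)
    hence "(\<psi> has_derivative (\<lambda>v. (grad (z + q) - grad z - hess x0 *v q) \<bullet> v)) (at z)"
      by (simp add: inner_diff_left)
    thus ?thesis by (rule has_derivative_at_withinI)
  qed
  have B: "onorm (\<lambda>v. (grad (z + q) - grad z - hess x0 *v q) \<bullet> v) \<le> L2 * (2 * r) * norm q"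
    if z: "z \<in> cball x0 r" for z
  proof -
    have "z \<in> cball x0 (2 * r)" "z + q \<in> cball x0 (2 * r)"
      using z r q norm_triangle_ineq[of "z - x0" q] by (auto simp: dist_norm norm_minus_commute algebra_simps)
    from gradient_linearization_error[OF hd lip L2 _ r(2) this(2,1)] r
    have "norm (grad (z + q) - grad z - hess x0 *v q) \<le> L2 * (2 * r) * norm q" by simp
    thus ?thesis using onorm_inner_le_norm order_trans by blast
  qed
  have "norm (\<psi> (x0 + p) - \<psi> x0) \<le> L2 * (2 * r) * norm q * norm ((x0 + p) - x0)"
  proof -
    have m1: "x0 + p \<in> cball x0 r" using p by (simp add: dist_norm)
    have m2: "x0 \<in> cball x0 r" using r by simp
    show ?thesis by (rule differentiable_bound[OF convex_cball _ B m1 m2]) (rule der)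
  qed
  moreover have "\<psi> (x0 + p) - \<psi> x0 = g (x0 + p + q) - g (x0 + p) - g (x0 + q) + g x0 - (hess x0 *v q) \<bullet> p"
    unfolding \<psi>_def by (simp add: inner_add_right algebra_simps)
  ultimately show ?thesis by simp
qed

lemma nonpos_if_le_linear:
  fixes D K c :: real
  assumes c: "c > 0" and K: "K \<ge> 0" and h: "\<And>t. 0 < t \<Longrightarrow> t \<le> c \<Longrightarrow> D \<le> K * t"
  shows "D \<le> 0"
proof (rule ccontr)
  assume "\<not> D \<le> 0"
  hence D: "D > 0" by simp
  define t where "t = min c (D / (2 * (K + 1)))"
  have t0: "t > 0" using c D K by (simp add: t_def)
  have "D \<le> K * t" using h[OF t0] by (simp add: t_def)
  also have "\<dots> \<le> K * (D / (2 * (K + 1)))" using K by (intro mult_left_mono) (auto simp: t_def)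
  also have "\<dots> < D" using D K by (simp add: field_simps) (smt (verit) mult_nonneg_nonneg)
  finally show False by simp
qed

lemma hessian_asymmetry_le:
  fixes g :: "real^'n \<Rightarrow> real" and grad :: "real^'n \<Rightarrow> real^'n" and hess :: "real^'n \<Rightarrow> real^'n^'n"
  assumes grad: "\<And>x. (g has_derivative (\<lambda>h. grad x \<bullet> h)) (at x)"
   and hd: "\<And>z. z \<in> cball x0 \<beta> \<Longrightarrow> (grad has_derivative (\<lambda>h. hess z *v h)) (at z within cball x0 \<beta>)"
   and lip: "\<And>z. z \<in> cball x0 \<beta> \<Longrightarrow> onorm (\<lambda>h. (hess z - hess x0) *v h) \<le> L2 * norm (z - x0)"
   and L2: "L2 \<ge> 0" and r: "0 \<le> r" "2 * r \<le> \<beta>" and p: "norm p \<le> r" and q: "norm q \<le> r"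
  shows "\<bar>(hess x0 *v q) \<bullet> p - (hess x0 *v p) \<bullet> q\<bar> \<le> 4 * L2 * r * norm p * norm q"
proof -
  define X where "X = g (x0 + p + q) - g (x0 + p) - g (x0 + q) + g x0"
  have "x0 + q + p = x0 + p + q" by (simp add: algebra_simps)
  hence "\<bar>X - (hess x0 *v p) \<bullet> q\<bar> \<le> L2 * (2 * r) * norm p * norm q"
    using second_difference_hessian_error[OF grad hd lip L2 r q p] by (simp add: X_def algebra_simps)
  moreover have "\<bar>X - (hess x0 *v q) \<bullet> p\<bar> \<le> L2 * (2 * r) * norm p * norm q"
    using second_difference_hessian_error[OF grad hd lip L2 r p q] by (simp add: X_def mult_ac)
  ultimately show ?thesis by linarith
qed

lemma hessian_symmetric:
  fixes g :: "real^'n \<Rightarrow> real" and grad :: "real^'n \<Rightarrow> real^'n" and hess :: "real^'n \<Rightarrow> real^'n^'n"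
  assumes grad: "\<And>x. (g has_derivative (\<lambda>h. grad x \<bullet> h)) (at x)"
   and hd: "\<And>z. z \<in> cball x0 \<beta> \<Longrightarrow> (grad has_derivative (\<lambda>h. hess z *v h)) (at z within cball x0 \<beta>)"
   and lip: "\<And>z. z \<in> cball x0 \<beta> \<Longrightarrow> onorm (\<lambda>h. (hess z - hess x0) *v h) \<le> L2 * norm (z - x0)"
   and L2: "L2 \<ge> 0" and \<beta>: "\<beta> > 0"
  shows "(hess x0 *v k) \<bullet> h = (hess x0 *v h) \<bullet> k"
proof -
  define m where "m = norm h + norm k + 1"
  have m0: "m > 0" by (simp add: m_def add_nonneg_pos)
  define D where "D = \<bar>(hess x0 *v k) \<bullet> h - (hess x0 *v h) \<bullet> k\<bar>"
  have "D \<le> 0"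
  proof (rule nonpos_if_le_linear[where c = "\<beta> / (2 * m)" and K = "4 * L2 * m * norm h * norm k"])
    fix t :: real assume t: "0 < t" "t \<le> \<beta> / (2 * m)"
    have scale: "hess x0 *v (t *\<^sub>R v) = t *\<^sub>R (hess x0 *v v)" for v
      by (rule linear_scale[OF matrix_vector_mul_linear])
    have "t^2 * D = \<bar>(hess x0 *v (t *\<^sub>R k)) \<bullet> (t *\<^sub>R h) - (hess x0 *v (t *\<^sub>R h)) \<bullet> (t *\<^sub>R k)\<bar>"
      by (simp add: D_def scale power2_eq_square abs_mult flip: right_diff_distrib)
    also have "\<dots> \<le> 4 * L2 * (t * m) * norm (t *\<^sub>R h) * norm (t *\<^sub>R k)"
      using t m0 by (intro hessian_asymmetry_le[OF grad hd lip L2]) (auto simp: m_def field_simps)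
    also have "\<dots> = t^2 * (4 * L2 * m * norm h * norm k * t)" using t by (simp add: power2_eq_square)
    finally show "D \<le> 4 * L2 * m * norm h * norm k * t" using t by simp
  qed (use \<beta> L2 m0 in auto)
  thus ?thesis by (simp add: D_def)
qed

section \<open>Symmetric matrices and the smallest eigenvalue\<close>

lemma quadratic_form_diff_scaleR:
  fixes B :: "real^'n^'n"
  assumes sym: "\<And>u v. (B *v u) \<bullet> v = (B *v v) \<bullet> u"
  shows "(u - t *\<^sub>R v) \<bullet> (B *v (u - t *\<^sub>R v)) = u \<bullet> (B *v u) - 2 * t * (v \<bullet> (B *v u)) + t^2 * (v \<bullet> (B *v v))"
proof -
  have lin: "B *v (t *\<^sub>R w) = t *\<^sub>R (B *v w)" for w
    by (rule linear_scale[OF matrix_vector_mul_linear])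
  have s: "u \<bullet> (B *v v) = v \<bullet> (B *v u)" using sym[of v u] by (simp add: inner_commute)
  show ?thesis
    by (simp add: matrix_vector_mult_diff_distrib lin inner_diff_left inner_diff_right s power2_eq_square algebra_simps)
qed

lemma psd_norm_square_le:
  fixes B :: "real^'n^'n"
  assumes sym: "\<And>u v. (B *v u) \<bullet> v = (B *v v) \<bullet> u"
   and psd: "\<And>u. u \<bullet> (B *v u) \<ge> 0" and bnd: "\<And>u. norm (B *v u) \<le> K * norm u" and K: "K > 0"
  shows "(norm (B *v u))^2 \<le> K * (u \<bullet> (B *v u))"
proof -
  define y where "y = B *v u"
  have "0 \<le> (u - (1/K) *\<^sub>R y) \<bullet> (B *v (u - (1/K) *\<^sub>R y))" by (rule psd)
  also have "\<dots> = u \<bullet> (B *v u) - 2 * (1/K) * (y \<bullet> (B *v u)) + (1/K)^2 * (y \<bullet> (B *v y))"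
    by (rule quadratic_form_diff_scaleR[OF sym])
  finally have expand: "0 \<le> u \<bullet> (B *v u) - 2 * (1/K) * (norm y)^2 + (1/K)^2 * (y \<bullet> (B *v y))"
    by (simp add: y_def power2_norm_eq_inner)
  have "y \<bullet> (B *v y) \<le> norm y * norm (B *v y)" by (rule norm_cauchy_schwarz)
  also have "\<dots> \<le> norm y * (K * norm y)" by (rule mult_left_mono[OF bnd]) simp
  finally have "y \<bullet> (B *v y) \<le> K * (norm y)^2" by (simp add: power2_eq_square algebra_simps)
  hence "(1/K)^2 * (y \<bullet> (B *v y)) \<le> (1/K)^2 * (K * (norm y)^2)" by (rule mult_left_mono) simp
  also have "\<dots> = (1/K) * (norm y)^2" using K by (simp add: power2_eq_square)
  finally have "0 \<le> u \<bullet> (B *v u) - (1/K) * (norm y)^2" using expand by simp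
  hence "(1/K) * (norm y)^2 \<le> u \<bullet> (B *v u)" by simp
  thus ?thesis using K by (simp add: y_def pos_divide_le_eq mult.commute)
qed

lemma shifted_matrix_vector_mult:
  fixes H :: "real^'n^'n"
  shows "(H - c *\<^sub>R mat 1) *v u = H *v u - c *\<^sub>R u"
  by (simp add: matrix_vector_mult_diff_rdistrib scaleR_matrix_vector_assoc[symmetric])

lemma psd_quadratic_form_eq_0_imp_null:
  fixes B :: "real^'n^'n"
  assumes sym: "\<And>u v. (B *v u) \<bullet> v = (B *v v) \<bullet> u"
    and psd: "\<And>u. 0 \<le> u \<bullet> (B *v u)" and x: "x \<bullet> (B *v x) = 0"
  shows "B *v x = 0"
proof -
  note bl = matrix_vector_mul_bounded_linear[of B]
  have bnd: "norm (B *v u) \<le> (onorm ((*v) B) + 1) * norm u" for u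
    using onorm[OF bl, of u] norm_ge_zero[of u] unfolding distrib_right by linarith
  have "(norm (B *v x))^2 \<le> (onorm ((*v) B) + 1) * (x \<bullet> (B *v x))"
    by (rule psd_norm_square_le[OF sym psd bnd]) (use onorm_pos_le[OF bl] in simp)
  thus ?thesis using x by simp
qed

lemma exists_unit_minimizer_quadratic_form:
  fixes H :: "real^'n^'n"
  obtains x where "norm x = 1" "\<And>u. (x \<bullet> (H *v x)) * (norm u)^2 \<le> u \<bullet> (H *v u)"
proof -
  define f where "f u = u \<bullet> (H *v u)" for u :: "real^'n"
  have cont: "continuous_on (sphere 0 1) f" unfolding f_def
    by (intro continuous_intros linear_continuous_on matrix_vector_mul_bounded_linear)
  obtain e :: "real^'n" where "norm e = 1" using vector_choose_size[of 1] by auto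
  hence "sphere (0::real^'n) 1 \<noteq> {}" by auto
  then obtain x where x: "x \<in> sphere 0 1" and min: "\<And>y. y \<in> sphere 0 1 \<Longrightarrow> f x \<le> f y"
    using continuous_attains_inf[OF compact_sphere _ cont] by blast
  have "f x * (norm u)^2 \<le> f u" for u
  proof (cases "u = 0")
    case False
    have "f x \<le> f ((1 / norm u) *\<^sub>R u)" using False by (intro min) simp
    also have "\<dots> = f u / (norm u)^2"
      by (simp add: f_def linear_scale[OF matrix_vector_mul_linear] power2_eq_square)
    finally show ?thesis using False by (simp add: field_simps)
  qed (simp add: f_def)
  thus ?thesis using x that by (simp add: f_def)
qed

lemma lambda_min_le_quadratic_form:
  fixes H :: "real^'n^'n"
  assumes sym: "\<And>u v. (H *v u) \<bullet> v = (H *v v) \<bullet> u"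
    and bdd: "bdd_below (real_eigenvalues H)"
  shows "x \<bullet> (H *v x) \<ge> lambda_min H * (norm x)^2"
proof -
  obtain xs where xs: "norm xs = 1" and min: "\<And>u. (xs \<bullet> (H *v xs)) * (norm u)^2 \<le> u \<bullet> (H *v u)"
    using exists_unit_minimizer_quadratic_form[of H] by blast
  define \<mu> where "\<mu> = xs \<bullet> (H *v xs)"
  define B where "B = H - \<mu> *\<^sub>R mat 1"
  have Bv: "B *v u = H *v u - \<mu> *\<^sub>R u" for u unfolding B_def by (rule shifted_matrix_vector_mult)
  have "B *v xs = 0"
  proof (rule psd_quadratic_form_eq_0_imp_null)
    show "(B *v u) \<bullet> v = (B *v v) \<bullet> u" for u v
      using sym[of u v] by (simp add: Bv inner_diff_left inner_diff_right inner_commute)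
    show "0 \<le> u \<bullet> (B *v u)" for u
      using min[of u] by (simp add: Bv \<mu>_def inner_diff_right power2_norm_eq_inner)
    show "xs \<bullet> (B *v xs) = 0"
      using xs by (simp add: Bv \<mu>_def inner_diff_right power2_norm_eq_inner[symmetric])
  qed
  moreover have "xs \<noteq> 0" using xs by auto
  ultimately have "\<mu> \<in> real_eigenvalues H" by (auto simp: real_eigenvalues_def Bv)
  hence "lambda_min H \<le> \<mu>" unfolding lambda_min_def by (rule cInf_lower[OF _ bdd])
  hence "lambda_min H * (norm x)^2 \<le> \<mu> * (norm x)^2" by (simp add: mult_right_mono)
  also have "\<dots> \<le> x \<bullet> (H *v x)" using min[of x] by (simp add: \<mu>_def)
  finally show ?thesis .
qed

lemma norm_scaleR_diff_square:
  fixes u v :: "'a::real_inner"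
  shows "(norm (a *\<^sub>R u - b *\<^sub>R v))^2 = a^2 * (norm u)^2 - 2 * a * b * (u \<bullet> v) + b^2 * (norm v)^2"
proof -
  have "(norm (a *\<^sub>R u - b *\<^sub>R v))^2 = (a *\<^sub>R u - b *\<^sub>R v) \<bullet> (a *\<^sub>R u - b *\<^sub>R v)" by (rule power2_norm_eq_inner)
  also have "\<dots> = a * a * (u \<bullet> u) - a * b * (u \<bullet> v) - b * a * (v \<bullet> u) + b * b * (v \<bullet> v)"
    by (simp add: inner_diff_left inner_diff_right algebra_simps)
  also have "\<dots> = a^2 * (norm u)^2 - 2 * a * b * (u \<bullet> v) + b^2 * (norm v)^2"
    by (simp only: power2_norm_eq_inner inner_commute[of v u]) (simp add: power2_eq_square)
  finally show ?thesis .
qed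

lemma real_eigenvalue_abs_le:
  fixes H :: "real^'n^'n"
  assumes bnd: "\<And>u. norm (H *v u) \<le> L * norm u" and c: "c \<in> real_eigenvalues H"
  shows "\<bar>c\<bar> \<le> L"
proof -
  obtain v where v: "v \<noteq> 0" "H *v v = c *\<^sub>R v" using c by (auto simp: real_eigenvalues_def)
  have "\<bar>c\<bar> * norm v \<le> L * norm v" using bnd[of v] v by simp
  thus ?thesis using v by simp
qed

lemma norm_scaleR_minus_psd_le:
  fixes A :: "real^'n^'n"
  assumes sym: "\<And>u v. (A *v u) \<bullet> v = (A *v v) \<bullet> u"
    and psd: "\<And>u. 0 \<le> u \<bullet> (A *v u)" and bnd: "\<And>u. norm (A *v u) \<le> K * norm u" and K: "K > 0"
    and \<eta>: "0 \<le> \<eta>" "\<eta> * K \<le> 2 * c"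
  shows "norm (c *\<^sub>R x - \<eta> *\<^sub>R (A *v x)) \<le> c * norm x"
proof -
  define p where "p = x \<bullet> (A *v x)"
  have p0: "0 \<le> p" using psd by (simp add: p_def)
  have "0 \<le> \<eta> * K" using \<eta> K by simp
  hence c0: "0 \<le> c" using \<eta> by linarith
  have "(norm (c *\<^sub>R x - \<eta> *\<^sub>R (A *v x)))^2 = c^2 * (norm x)^2 - 2 * c * \<eta> * p + \<eta>^2 * (norm (A *v x))^2"
    unfolding p_def norm_scaleR_diff_square by simp
  also have "\<dots> \<le> c^2 * (norm x)^2 - 2 * c * \<eta> * p + \<eta>^2 * (K * p)"
    using mult_left_mono[OF psd_norm_square_le[OF sym psd bnd K, of x], of "\<eta>^2"] by (simp add: p_def)
  also have "\<dots> = c^2 * (norm x)^2 - \<eta> * p * (2 * c - \<eta> * K)" by (simp add: power2_eq_square algebra_simps)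
  also have "\<dots> \<le> c^2 * (norm x)^2"
    using mult_nonneg_nonneg[OF mult_nonneg_nonneg[OF \<eta>(1) p0], of "2 * c - \<eta> * K"] \<eta>(2) by simp
  finally have "(norm (c *\<^sub>R x - \<eta> *\<^sub>R (A *v x)))^2 \<le> (c * norm x)^2" by (simp add: power_mult_distrib)
  thus ?thesis by (rule power2_le_imp_le) (use c0 in simp)
qed

text \<open>Shifting \<open>H\<close> by its smallest eigenvalue gives a positive semidefinite matrix, on which a
  short gradient step does not expand.\<close>

lemma norm_gradient_map_le:
  fixes H :: "real^'n^'n"
  assumes sym: "\<And>u v. (H *v u) \<bullet> v = (H *v v) \<bullet> u"
    and bnd: "\<And>u. norm (H *v u) \<le> L * norm u" and L: "L > 0"
    and eig: "real_eigenvalues H \<noteq> {}" and lam: "lambda_min H \<le> 0"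
    and \<eta>: "0 \<le> \<eta>" "\<eta> * L \<le> 1"
  shows "norm (x - \<eta> *\<^sub>R (H *v x)) \<le> (1 - \<eta> * lambda_min H) * norm x"
proof -
  define lm where "lm = lambda_min H"
  define A where "A = H - lm *\<^sub>R mat 1"
  have eig_ge: "- L \<le> c" if "c \<in> real_eigenvalues H" for c
    using real_eigenvalue_abs_le[OF bnd that] by simp
  have bdd: "bdd_below (real_eigenvalues H)" using eig_ge by (rule bdd_belowI)
  have lm_ge: "- L \<le> lm" unfolding lm_def lambda_min_def by (rule cInf_greatest[OF eig eig_ge])
  have Av: "A *v u = H *v u - lm *\<^sub>R u" for u unfolding A_def by (rule shifted_matrix_vector_mult)
  have symA: "(A *v u) \<bullet> v = (A *v v) \<bullet> u" for u v
    using sym[of u v] by (simp add: Av inner_diff_left inner_diff_right inner_commute)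
  have psd: "0 \<le> u \<bullet> (A *v u)" for u
    using lambda_min_le_quadratic_form[OF sym bdd, of u]
    by (simp add: Av lm_def inner_diff_right power2_norm_eq_inner)
  have bndA: "norm (A *v u) \<le> (2 * L) * norm u" for u
  proof -
    have "norm (A *v u) \<le> norm (H *v u) + \<bar>lm\<bar> * norm u" unfolding Av by (metis norm_scaleR norm_triangle_ineq4)
    also have "\<dots> \<le> L * norm u + L * norm u"
      using bnd[of u] lm_ge lam by (intro add_mono mult_right_mono) (auto simp: lm_def)
    finally show ?thesis by simp
  qed
  have "x - \<eta> *\<^sub>R (H *v x) = (1 - \<eta> * lm) *\<^sub>R x - \<eta> *\<^sub>R (A *v x)"
    by (simp add: Av algebra_simps)
  also have "norm \<dots> \<le> (1 - \<eta> * lm) * norm x"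
  proof (rule norm_scaleR_minus_psd_le[OF symA psd bndA])
    have "\<eta> * lm \<le> 0" using \<eta> lam by (simp add: lm_def mult_nonneg_nonpos)
    thus "\<eta> * (2 * L) \<le> 2 * (1 - \<eta> * lm)" using \<eta> by (simp add: algebra_simps)
  qed (use \<eta> L in auto)
  finally show ?thesis by (simp add: lm_def)
qed

section \<open>Inexact gradient descent\<close>

lemma inexact_step_polynomial_bound:
  fixes n b a E k :: real
  assumes n: "n \<ge> 0" and b: "b \<ge> 0" and a: "0 \<le> a" "a \<le> 1/20" and E: "E \<ge> 0" "E \<le> a * n + b"
    and k: "k = (1 - a) / (1 + a)^2"
  shows "(- (n^2)) + n * E + k/2 * (n + E)^2 \<le> 5 * b^2 - n^2/5"
proof -
  have kk: "k * (1 + a)^2 = 1 - a" using a by (simp add: k)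
  have k1: "k * (1 + a) \<le> 1" using a by (simp add: k power2_eq_square)
  have "0 \<le> k" using a by (simp add: k)
  moreover have "k \<le> k * (1 + a)" using \<open>0 \<le> k\<close> a by (simp add: algebra_simps)
  ultimately have k0: "0 \<le> k" "k \<le> 1" using k1 by linarith+
  have "k/2 * (n + E)^2 \<le> k/2 * ((1 + a) * n + b)^2"
    using n E k0 by (intro mult_left_mono power_mono) (auto simp: algebra_simps)
  also have "\<dots> = (k * (1 + a)^2)/2 * n^2 + (k * (1 + a)) * (n * b) + k/2 * b^2"
    by (simp add: power2_eq_square algebra_simps)
  also have "\<dots> \<le> (1 - a)/2 * n^2 + n * b + b^2/2"
    unfolding kk using mult_right_mono[OF k1, of "n * b"] mult_right_mono[OF k0(2), of "b^2"] n b
    by (intro add_mono) auto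
  also have "\<dots> = n^2/2 - (a * n^2)/2 + n * b + b^2/2" by (simp add: field_simps)
  finally have "k/2 * (n + E)^2 \<le> n^2/2 - (a * n^2)/2 + n * b + b^2/2" .
  moreover have "n * E \<le> a * n^2 + n * b" using mult_left_mono[OF E(2) n] by (simp add: power2_eq_square algebra_simps)
  moreover have "a * n^2 \<le> 1/20 * n^2" using a by (intro mult_right_mono) auto
  moreover have "0 \<le> 11/40 * (n - 40/11 * b)^2 + (9/2 - 40/11) * b^2" by simp
  hence "0 \<le> 11/40 * n^2 - 2 * (n * b) + 9/2 * b^2" by (simp add: power2_eq_square algebra_simps)
  ultimately show ?thesis by linarith
qed

lemma inexact_step_size_bounds:
  fixes a L1 \<eta> :: real
  assumes a: "0 \<le> a" "a < 1" and L1: "L1 > 0" and \<eta>: "\<eta> = (1 - a) / ((1 + a)^2 * L1)"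
  shows "0 < \<eta>" "\<eta> * L1 \<le> 1"
proof -
  have "0 < (1 + a)^2 * L1" using a L1 by simp
  thus "0 < \<eta>" using a by (simp add: \<eta>)
  have "1 - a \<le> (1 + a)^2" using a by (simp add: power2_eq_square algebra_simps)
  thus "\<eta> * L1 \<le> 1" using a L1 by (simp add: \<eta>)
qed

lemma inexact_gradient_step_descent:
  fixes g :: "'a::real_inner \<Rightarrow> real"
  assumes grad: "\<And>x. (g has_derivative (\<lambda>h. grad x \<bullet> h)) (at x)"
    and grad_lip: "\<And>x z. norm (grad x - grad z) \<le> L1 * norm (x - z)" and L1: "L1 > 0"
    and err: "norm (grad x - v) \<le> a * norm (grad x) + b"
    and a: "0 \<le> a" "a \<le> 1/20" and b: "0 \<le> b" and \<eta>: "\<eta> = (1 - a) / ((1 + a)^2 * L1)"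
  shows "g (x - \<eta> *\<^sub>R v) \<le> g x + \<eta> * (5 * b^2 - (norm (grad x))^2 / 5)"
proof -
  define e where "e = grad x - v"
  define n where "n = norm (grad x)"
  have \<eta>0: "\<eta> \<ge> 0" using a L1 by (simp add: \<eta>)
  have "grad x \<bullet> v = n^2 - grad x \<bullet> e" by (simp add: e_def n_def inner_diff_right power2_norm_eq_inner)
  moreover have "grad x \<bullet> e \<le> n * norm e" using norm_cauchy_schwarz[of "grad x" e] by (simp add: n_def)
  ultimately have inner_bound: "- (grad x \<bullet> v) \<le> - (n^2) + n * norm e" by simp
  have "norm v \<le> n + norm e" unfolding n_def e_def by (metis norm_triangle_sub norm_minus_commute add.commute)
  hence norm_bound: "(L1 * \<eta>)/2 * (norm v)^2 \<le> (L1 * \<eta>)/2 * (n + norm e)^2"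
    using \<eta>0 L1 by (intro mult_left_mono power_mono) auto
  have "g (x - \<eta> *\<^sub>R v) = g (x + (- \<eta> *\<^sub>R v))" by simp
  also have "\<dots> \<le> g x + grad x \<bullet> (- \<eta> *\<^sub>R v) + L1/2 * (norm (- \<eta> *\<^sub>R v))^2"
    by (rule lipschitz_gradient_quadratic_bound[OF grad grad_lip])
  also have "\<dots> = g x + \<eta> * (- (grad x \<bullet> v) + (L1 * \<eta>)/2 * (norm v)^2)"
    using \<eta>0 by (simp add: power2_eq_square algebra_simps)
  also have "\<dots> \<le> g x + \<eta> * (- (n^2) + n * norm e + (L1 * \<eta>)/2 * (n + norm e)^2)"
    using inner_bound norm_bound \<eta>0 by (intro add_left_mono mult_left_mono) auto
  also have "\<dots> \<le> g x + \<eta> * (5 * b^2 - n^2/5)"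
    using err L1 a b \<eta>0
    by (intro add_left_mono mult_left_mono inexact_step_polynomial_bound) (auto simp: n_def e_def \<eta>)
  finally show ?thesis by (simp add: n_def)
qed

lemma small_decrease_bounds_gradient_energy:
  fixes gz n :: "nat \<Rightarrow> real"
  assumes desc: "\<And>t. gz (Suc t) \<le> gz t + \<eta> * (5 * b^2 - (n t)^2 / 5)"
    and small_decrease: "gz M - gz 0 > - F"
    and T: "0 < \<eta> * real M" and bF: "b^2 \<le> F / (40 * (\<eta> * real M))"
  shows "\<eta> * (\<Sum>s<M. (n s)^2) \<le> 6 * F"
proof -
  have "gz M - gz 0 = (\<Sum>s<M. gz (Suc s) - gz s)" by (simp add: sum_lessThan_telescope)
  also have "\<dots> \<le> (\<Sum>s<M. \<eta> * (5 * b^2 - (n s)^2 / 5))"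
    by (rule sum_mono) (use desc in \<open>smt (verit)\<close>)
  also have "\<dots> = 5 * b^2 * (\<eta> * real M) - \<eta> / 5 * (\<Sum>s<M. (n s)^2)"
    by (simp add: sum_subtractf sum_distrib_left algebra_simps sum_divide_distrib)
  finally have "- F < 5 * b^2 * (\<eta> * real M) - \<eta> / 5 * (\<Sum>s<M. (n s)^2)"
    using small_decrease by simp
  moreover have "5 * b^2 * (\<eta> * real M) \<le> 5 * (F / (40 * (\<eta> * real M))) * (\<eta> * real M)"
    using bF T by (intro mult_right_mono) auto
  moreover have "5 * (F / (40 * (\<eta> * real M))) * (\<eta> * real M) = F / 8" using T by (auto simp: field_simps)
  moreover have "0 \<le> 5 * b^2 * (\<eta> * real M)" using T by simp
  ultimately show ?thesis by linarith
qed

text \<open>AM-GM with the weight \<open>c = R / (5 \<eta> M)\<close> turns the energy bound into a length bound.\<close>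

lemma gradient_energy_bounds_path_length:
  fixes n :: "nat \<Rightarrow> real"
  assumes energy: "\<eta> * (\<Sum>s<M. (n s)^2) \<le> 6 * F"
    and T: "0 < \<eta> * real M" and R: "0 < R" and F: "F \<le> R^2 / (50 * (\<eta> * real M))"
  shows "\<eta> * (\<Sum>s<M. n s) \<le> 2/5 * R"
proof -
  define T where "T = \<eta> * real M"
  define c where "c = R / (5 * T)"
  have \<eta>: "\<eta> > 0" and M: "0 < real M" using T by (simp_all add: zero_less_mult_iff)
  have c0: "c > 0" using R T by (simp add: c_def T_def)
  have "n s \<le> (n s)^2 / (2 * c) + c / 2" for s
  proof -
    have "0 \<le> (n s - c)^2" by simp
    hence "2 * c * n s \<le> (n s)^2 + c^2" by (simp add: power2_eq_square algebra_simps)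
    thus ?thesis using c0 by (simp add: field_simps power2_eq_square)
  qed
  hence "(\<Sum>s<M. n s) \<le> (\<Sum>s<M. (n s)^2 / (2 * c) + c / 2)" by (intro sum_mono)
  also have "\<dots> = (\<Sum>s<M. (n s)^2) / (2 * c) + real M * c / 2" by (simp add: sum.distrib sum_divide_distrib)
  finally have "\<eta> * (\<Sum>s<M. n s) \<le> \<eta> * ((\<Sum>s<M. (n s)^2) / (2 * c) + real M * c / 2)"
    using \<eta> by (intro mult_left_mono) auto
  also have "\<dots> = (\<eta> * (\<Sum>s<M. (n s)^2)) / (2 * c) + T * c / 2" by (simp add: T_def algebra_simps)
  also have "\<dots> \<le> (6 * F) / (2 * c) + T * c / 2"
    using c0 by (intro add_right_mono divide_right_mono energy) simp
  also have "\<dots> = 15 * F * T / R + R / 10" using \<eta> M R by (auto simp: c_def T_def field_simps)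
  also have "\<dots> \<le> 15 * (R^2 / (50 * T)) * T / R + R / 10"
    using F \<eta> M R by (intro add_right_mono divide_right_mono mult_right_mono mult_left_mono) (auto simp: T_def)
  also have "\<dots> = 2/5 * R" using \<eta> M R by (auto simp: T_def field_simps power2_eq_square)
  finally show ?thesis .
qed

lemma small_decrease_localizes:
  fixes z :: "nat \<Rightarrow> 'v::real_normed_vector" and n gz :: "nat \<Rightarrow> real"
  assumes desc: "\<And>t. gz (Suc t) \<le> gz t + \<eta> * (5 * b^2 - (n t)^2 / 5)"
    and step: "\<And>t. norm (z (Suc t) - z t) \<le> \<eta> * ((1 + a) * n t + b)"
    and n0: "\<And>t. n t \<ge> 0"
    and small_decrease: "gz M - gz 0 > - F"
    and a: "0 \<le> a" "a \<le> 1/20" and T: "0 < \<eta> * real M" and R: "R > 0"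
    and F: "F \<le> R^2 / (50 * (\<eta> * real M))" and bF: "b^2 \<le> F / (40 * (\<eta> * real M))"
    and Tb: "\<eta> * real M * b \<le> R / 4" and t: "t \<le> M"
  shows "norm (z t - z 0) \<le> 17/25 * R"
proof -
  have \<eta>: "\<eta> > 0" using T by (simp add: zero_less_mult_iff)
  have length: "\<eta> * (\<Sum>s<M. n s) \<le> 2/5 * R"
    using small_decrease_bounds_gradient_energy[OF desc small_decrease T bF] T R F
    by (rule gradient_energy_bounds_path_length)
  have "norm (z t - z 0) = norm (\<Sum>s<t. z (Suc s) - z s)" by (simp add: sum_lessThan_telescope)
  also have "\<dots> \<le> (\<Sum>s<t. norm (z (Suc s) - z s))" by (rule norm_sum)
  also have "\<dots> \<le> (\<Sum>s<M. norm (z (Suc s) - z s))" using t by (intro sum_mono2) auto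
  also have "\<dots> \<le> (\<Sum>s<M. \<eta> * ((1 + a) * n s + b))" by (intro sum_mono step)
  also have "\<dots> = (1 + a) * (\<eta> * (\<Sum>s<M. n s)) + \<eta> * real M * b"
    by (simp add: sum.distrib sum_distrib_left algebra_simps)
  also have "\<dots> \<le> 21/20 * (2/5 * R) + R / 4"
  proof -
    have "(1 + a) * (\<eta> * (\<Sum>s<M. n s)) \<le> 21/20 * (2/5 * R)"
      by (rule mult_mono) (use length a \<eta> n0 in \<open>auto intro!: mult_nonneg_nonneg sum_nonneg\<close>)
    thus ?thesis using Tb by linarith
  qed
  also have "\<dots> \<le> 17/25 * R" using R by simp
  finally show ?thesis .
qed

section \<open>Two coupled runs near a strict saddle point\<close>

lemma norm_le_perturbed_growth:
  fixes w :: "nat \<Rightarrow> 'v::real_normed_vector"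
  assumes step: "\<And>t. t < M \<Longrightarrow> norm (w (Suc t)) \<le> p * norm (w t) + \<Xi>"
    and p: "1 \<le> p" and \<Xi>: "0 \<le> \<Xi>"
  shows "t \<le> M \<Longrightarrow> norm (w t) \<le> p^t * (norm (w 0) + real t * \<Xi>)"
proof (induction t)
  case (Suc t)
  have "1 \<le> p^Suc t" using p by (rule one_le_power)
  hence "\<Xi> \<le> p^Suc t * \<Xi>" using \<Xi> by (simp add: mult_le_cancel_right1)
  moreover have "p * norm (w t) \<le> p * (p^t * (norm (w 0) + real t * \<Xi>))"
    using Suc p by (intro mult_left_mono) auto
  ultimately have "norm (w (Suc t)) \<le> p^Suc t * (norm (w 0) + real t * \<Xi>) + p^Suc t * \<Xi>"
    using step[of t] Suc by simp
  thus ?case by (simp add: algebra_simps)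
qed simp

lemma power_perturbed_le:
  fixes q \<epsilon> :: real
  assumes q: "1 \<le> q" and \<epsilon>: "0 \<le> \<epsilon>" and M\<epsilon>: "real M * \<epsilon> \<le> 1/4" and t: "t \<le> M"
  shows "(q + \<epsilon>)^t \<le> 3/2 * q^t"
proof -
  have "q + \<epsilon> \<le> q * (1 + \<epsilon>)" using mult_left_mono[OF q \<epsilon>] by (simp add: algebra_simps)
  hence "(q + \<epsilon>)^t \<le> q^t * (1 + \<epsilon>)^t" using q \<epsilon> by (simp add: power_mono flip: power_mult_distrib)
  also have "(1 + \<epsilon>)^t \<le> (1 + \<epsilon>)^M" using t \<epsilon> by (intro power_increasing) auto
  also have "\<dots> \<le> (exp \<epsilon>)^M" using \<epsilon> by (intro power_mono exp_ge_add_one_self) auto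
  also have "(exp \<epsilon>)^M \<le> exp (1/4)" using M\<epsilon> by (simp flip: exp_of_nat_mult)
  also have "exp (1/4 :: real) \<le> 3/2" using exp_bound_lemma[of "1/4 :: real"] by simp
  finally show ?thesis using q by (simp add: mult.commute)
qed

lemma recurrence_lower_bound:
  fixes u n :: "nat \<Rightarrow> real"
  assumes step: "\<And>t. t < M \<Longrightarrow> q * u t - \<epsilon> * n t - \<Xi> \<le> u (Suc t)"
    and n: "\<And>t. t \<le> M \<Longrightarrow> n t \<le> C * q^t"
    and q: "1 \<le> q" and \<epsilon>: "0 \<le> \<epsilon>" and \<Xi>: "0 \<le> \<Xi>" and C: "0 \<le> C"
  shows "t \<le> M \<Longrightarrow> q^t * (u 0 - real t * (\<epsilon> * C + \<Xi>)) \<le> u t"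
proof (induction t)
  case (Suc t)
  have "q^t \<le> q^Suc t" using q by simp
  have "1 \<le> q^Suc t" using q by (rule one_le_power)
  hence "\<Xi> \<le> q^Suc t * \<Xi>" using \<Xi> by (simp add: mult_le_cancel_right1)
  moreover have "\<epsilon> * n t \<le> \<epsilon> * (C * q^t)" using n[of t] Suc \<epsilon> by (intro mult_left_mono) auto
  moreover have "\<dots> \<le> q^Suc t * (\<epsilon> * C)"
    using mult_left_mono[OF \<open>q^t \<le> q^Suc t\<close>, of "\<epsilon> * C"] \<epsilon> C by (simp add: ac_simps)
  moreover have "q * (q^t * (u 0 - real t * (\<epsilon> * C + \<Xi>))) \<le> q * u t"
    using Suc q by (intro mult_left_mono) auto
  ultimately have "q^Suc t * (u 0 - real t * (\<epsilon> * C + \<Xi>)) - q^Suc t * (\<epsilon> * C) - q^Suc t * \<Xi> \<le> u (Suc t)"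
    using step[of t] Suc by simp
  thus ?case by (simp add: algebra_simps)
qed simp

lemma coupled_difference_growth:
  fixes w :: "nat \<Rightarrow> 'v::real_inner" and e0 :: 'v
  assumes norm_step: "\<And>t. t < M \<Longrightarrow> norm (w (Suc t)) \<le> (q + \<epsilon>) * norm (w t) + \<Xi>"
    and component_step: "\<And>t. t < M \<Longrightarrow> e0 \<bullet> w (Suc t) \<ge> q * (e0 \<bullet> w t) - \<epsilon> * norm (w t) - \<Xi>"
    and w0: "w 0 = U *\<^sub>R e0" and e0: "norm e0 = 1" and q: "q \<ge> 1" and \<epsilon>: "\<epsilon> \<ge> 0" and \<Xi>: "\<Xi> \<ge> 0"
    and U: "U > 0" and M\<epsilon>: "real M * \<epsilon> \<le> 1/4" and M\<Xi>: "real M * \<Xi> \<le> 3/16 * U"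
  shows "e0 \<bullet> w M \<ge> 1/3 * q^M * U"
proof -
  have norm_w: "norm (w t) \<le> 9/5 * U * q^t" if t: "t \<le> M" for t
  proof -
    have "norm (w t) \<le> (q + \<epsilon>)^t * (U + real t * \<Xi>)"
      using norm_le_perturbed_growth[where w = w and p = "q + \<epsilon>", OF norm_step _ \<Xi> t] q \<epsilon> w0 e0 U by simp
    also have "\<dots> \<le> (3/2 * q^t) * (U + 3/16 * U)"
      using power_perturbed_le[OF q \<epsilon> M\<epsilon> t] mult_right_mono[OF of_nat_mono[OF t] \<Xi>] M\<Xi> \<Xi> U q
      by (intro mult_mono) auto
    also have "\<dots> \<le> 9/5 * U * q^t" using q U by (simp add: algebra_simps)
    finally show ?thesis .
  qed
  have C: "0 \<le> 9/5 * U" using U by simp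
  have "q^M * (e0 \<bullet> w 0 - real M * (\<epsilon> * (9/5 * U) + \<Xi>)) \<le> e0 \<bullet> w M"
    by (rule recurrence_lower_bound[where u = "\<lambda>t. e0 \<bullet> w t" and n = "\<lambda>t. norm (w t)" and C = "9/5 * U",
          OF component_step norm_w q \<epsilon> \<Xi> C order_refl])
  moreover have "1/3 * U \<le> e0 \<bullet> w 0 - real M * (\<epsilon> * (9/5 * U) + \<Xi>)"
  proof -
    have "e0 \<bullet> w 0 = U" using w0 e0 by (simp add: power2_norm_eq_inner[symmetric])
    moreover have "real M * (\<epsilon> * (9/5 * U)) \<le> 9/5 * U * (1/4)"
      using mult_left_mono[OF M\<epsilon>, of "9/5 * U"] U by (simp add: ac_simps)
    ultimately show ?thesis using M\<Xi> U distrib_left[of "real M" "\<epsilon> * (9/5 * U)" \<Xi>] by linarith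
  qed
  moreover have "0 \<le> q^M" using q by simp
  ultimately have "q^M * (1/3 * U) \<le> e0 \<bullet> w M" by (meson mult_left_mono order_trans)
  thus ?thesis by (simp add: ac_simps)
qed

lemma inexact_gradient_descent_localizes:
  fixes g :: "'a::real_inner \<Rightarrow> real" and z :: "nat \<Rightarrow> 'a"
  assumes grad: "\<And>x. (g has_derivative (\<lambda>h. grad x \<bullet> h)) (at x)"
    and grad_lip: "\<And>x z. norm (grad x - grad z) \<le> L1 * norm (x - z)" and L1: "L1 > 0"
    and inexact: "\<And>x. norm (grad x - G x) \<le> a * norm (grad x) + b"
    and a: "0 \<le> a" "a \<le> 1/20" and b: "0 \<le> b" and \<eta>: "\<eta> = (1 - a) / ((1 + a)^2 * L1)"
    and z_iter: "\<And>t. z (Suc t) = z t - \<eta> *\<^sub>R G (z t)"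
    and small_decrease: "g (z M) - g (z 0) > - F"
    and M: "M > 0" and R: "R > 0"
    and F: "F \<le> R^2 / (50 * (\<eta> * real M))" and bF: "b^2 \<le> F / (40 * (\<eta> * real M))"
    and Tb: "\<eta> * real M * b \<le> R / 4" and t: "t \<le> M"
  shows "norm (z t - z 0) \<le> 17/25 * R"
proof -
  have \<eta>0: "\<eta> > 0" using inexact_step_size_bounds[OF a(1) _ L1 \<eta>] a by simp
  have desc: "g (z (Suc s)) \<le> g (z s) + \<eta> * (5 * b^2 - (norm (grad (z s)))^2 / 5)" for s
    unfolding z_iter by (rule inexact_gradient_step_descent[OF grad grad_lip L1 inexact a b \<eta>])
  have step: "norm (z (Suc s) - z s) \<le> \<eta> * ((1 + a) * norm (grad (z s)) + b)" for s
  proof -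
    have "norm (G (z s)) \<le> norm (grad (z s)) + norm (grad (z s) - G (z s))"
      by (metis norm_triangle_sub norm_minus_commute add.commute)
    also have "\<dots> \<le> (1 + a) * norm (grad (z s)) + b" using inexact[of "z s"] by (simp add: algebra_simps)
    finally show ?thesis using \<eta>0 by (simp add: z_iter mult_left_mono)
  qed
  show ?thesis
    using \<eta>0 M by (intro small_decrease_localizes[OF desc step _ small_decrease a _ R F bF Tb t]) auto
qed

lemma inexact_gradient_difference_linearization:
  fixes grad G :: "real^'n \<Rightarrow> real^'n" and hess :: "real^'n \<Rightarrow> real^'n^'n"
  assumes hess: "\<And>z. z \<in> cball ytil \<beta> \<Longrightarrow> (grad has_derivative (\<lambda>h. hess z *v h)) (at z within cball ytil \<beta>)"
    and hess_lip: "\<And>z. z \<in> cball ytil \<beta> \<Longrightarrow> onorm (\<lambda>h. (hess z - hess ytil) *v h) \<le> L2 * norm (z - ytil)"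
    and L2: "L2 \<ge> 0"
    and grad_lip: "\<And>x z. norm (grad x - grad z) \<le> L1 * norm (x - z)" and L1: "L1 \<ge> 0"
    and inexact: "\<And>x. norm (grad x - G x) \<le> a * norm (grad x) + b" and a: "0 \<le> a"
    and ytil_grad: "norm (grad ytil) \<le> \<epsilon>1"
    and R: "0 \<le> R" "R \<le> \<beta>" and x: "x \<in> cball ytil R" and x': "x' \<in> cball ytil R"
  shows "norm (G x - G x' - hess ytil *v (x - x')) \<le> L2 * R * norm (x - x') + 2 * (a * (\<epsilon>1 + L1 * R) + b)"
proof -
  have inexact_local: "norm (grad u - G u) \<le> a * (\<epsilon>1 + L1 * R) + b" if u: "u \<in> cball ytil R" for u
  proof -
    have "norm (grad u) \<le> norm (grad ytil) + norm (grad u - grad ytil)" by (metis norm_triangle_sub)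
    also have "\<dots> \<le> \<epsilon>1 + L1 * R"
      using ytil_grad grad_lip[of u ytil] u L1 mult_left_mono[of "norm (u - ytil)" R L1]
      by (simp add: dist_norm norm_minus_commute)
    finally have "a * norm (grad u) \<le> a * (\<epsilon>1 + L1 * R)" using a by (rule mult_left_mono)
    thus ?thesis using inexact[of u] by linarith
  qed
  have triangle: "norm (u - v + w) \<le> norm u + norm v + norm w" for u v w :: "real^'n"
    using norm_triangle_ineq[of "u - v" w] norm_triangle_ineq4[of u v] by linarith
  have split: "G x - G x' - hess ytil *v (x - x')
      = (grad x - grad x' - hess ytil *v (x - x')) - (grad x - G x) + (grad x' - G x')"
    by (simp add: algebra_simps)
  have "norm (G x - G x' - hess ytil *v (x - x'))
      \<le> norm (grad x - grad x' - hess ytil *v (x - x')) + norm (grad x - G x) + norm (grad x' - G x')"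
    unfolding split by (rule triangle)
  moreover have "norm (grad x - grad x' - hess ytil *v (x - x')) \<le> L2 * R * norm (x - x')"
    by (rule gradient_linearization_error[OF hess hess_lip L2 R x x'])
  moreover note inexact_local[OF x] inexact_local[OF x']
  ultimately show ?thesis unfolding mult_2 by linarith
qed

lemma hessian_bounded_symmetric:
  fixes g :: "real^'n \<Rightarrow> real" and grad :: "real^'n \<Rightarrow> real^'n" and hess :: "real^'n \<Rightarrow> real^'n^'n"
  assumes grad: "\<And>x. (g has_derivative (\<lambda>h. grad x \<bullet> h)) (at x)"
    and grad_lip: "\<And>x z. norm (grad x - grad z) \<le> L1 * norm (x - z)"
    and hess: "\<And>z. z \<in> cball x0 \<beta> \<Longrightarrow> (grad has_derivative (\<lambda>h. hess z *v h)) (at z within cball x0 \<beta>)"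
    and hess_lip: "\<And>z. z \<in> cball x0 \<beta> \<Longrightarrow> onorm (\<lambda>h. (hess z - hess x0) *v h) \<le> L2 * norm (z - x0)"
    and L2: "L2 \<ge> 0" and \<beta>: "0 < \<beta>"
  shows "norm (hess x0 *v u) \<le> L1 * norm u" and "(hess x0 *v u) \<bullet> v = (hess x0 *v v) \<bullet> u"
proof -
  have "x0 \<in> cball x0 \<beta>" using \<beta> by simp
  from has_derivative_subset[OF hess[OF this] ball_subset_cball]
  have "(grad has_derivative (\<lambda>h. hess x0 *v h)) (at x0)" using at_within_open[of x0 "ball x0 \<beta>"] \<beta> by simp
  thus "norm (hess x0 *v u) \<le> L1 * norm u" by (rule has_derivative_norm_le_lipschitz) (rule grad_lip)
  show "(hess x0 *v u) \<bullet> v = (hess x0 *v v) \<bullet> u" by (rule hessian_symmetric[OF grad hess hess_lip L2 \<beta>])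
qed

lemma coupled_runs_diverge:
  fixes g :: "real^'n \<Rightarrow> real" and grad G :: "real^'n \<Rightarrow> real^'n" and hess :: "real^'n \<Rightarrow> real^'n^'n"
    and y y' :: "nat \<Rightarrow> real^'n"
  assumes grad: "\<And>x. (g has_derivative (\<lambda>h. grad x \<bullet> h)) (at x)"
    and grad_lip: "\<And>x z. norm (grad x - grad z) \<le> L1 * norm (x - z)" and L1: "L1 > 0"
    and hess: "\<And>z. z \<in> cball ytil \<beta> \<Longrightarrow> (grad has_derivative (\<lambda>h. hess z *v h)) (at z within cball ytil \<beta>)"
    and hess_lip: "\<And>z. z \<in> cball ytil \<beta> \<Longrightarrow> onorm (\<lambda>h. (hess z - hess ytil) *v h) \<le> L2 * norm (z - ytil)"
    and L2: "L2 \<ge> 0"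
    and inexact: "\<And>x. norm (grad x - G x) \<le> a * norm (grad x) + b" and a: "0 \<le> a" and b: "0 \<le> b"
    and ytil_grad: "norm (grad ytil) \<le> \<epsilon>1"
    and e0: "norm e0 = 1" "hess ytil *v e0 = lambda_min (hess ytil) *\<^sub>R e0"
    and lam: "lambda_min (hess ytil) \<le> - \<epsilon>2" and \<epsilon>2: "0 \<le> \<epsilon>2"
    and \<eta>: "0 \<le> \<eta>" "\<eta> * L1 \<le> 1"
    and y_iter: "\<And>t. y (Suc t) = y t - \<eta> *\<^sub>R G (y t)"
    and y'_iter: "\<And>t. y' (Suc t) = y' t - \<eta> *\<^sub>R G (y' t)"
    and y0: "y 0 = y' 0 + U *\<^sub>R e0" and U: "U > 0"
    and near: "\<And>t. t \<le> M \<Longrightarrow> y t \<in> cball ytil R" "\<And>t. t \<le> M \<Longrightarrow> y' t \<in> cball ytil R"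
    and R: "0 < R" "R \<le> \<beta>"
    and curvature: "\<eta> * real M * L2 * R \<le> 1/4"
    and errors: "2 * (\<eta> * real M) * (a * (\<epsilon>1 + L1 * R) + b) \<le> 3/16 * U"
  shows "1/3 * (1 + \<eta> * \<epsilon>2)^M * U \<le> e0 \<bullet> (y M - y' M)"
proof -
  define H where "H = hess ytil"
  define q where "q = 1 - \<eta> * lambda_min H"
  define w where "w t = y t - y' t" for t
  define \<epsilon> where "\<epsilon> = \<eta> * (L2 * R)"
  define \<Xi> where "\<Xi> = \<eta> * (2 * (a * (\<epsilon>1 + L1 * R) + b))"
  have "0 < \<beta>" using R by linarith
  note H_bnd = hessian_bounded_symmetric(1)[OF grad grad_lip hess hess_lip L2 this, folded H_def]
    and H_sym = hessian_bounded_symmetric(2)[OF grad grad_lip hess hess_lip L2 this, folded H_def]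
  have "e0 \<noteq> 0" using e0(1) by auto
  hence "lambda_min H \<in> real_eigenvalues H" using e0(2) unfolding real_eigenvalues_def H_def by blast
  hence expand: "norm (x - \<eta> *\<^sub>R (H *v x)) \<le> q * norm x" for x
    unfolding q_def using lam \<epsilon>2 \<eta> by (intro norm_gradient_map_le[OF H_sym H_bnd L1]) (auto simp: H_def)
  have q: "1 + \<eta> * \<epsilon>2 \<le> q" using lam \<eta> mult_left_mono[OF lam, of \<eta>] by (simp add: q_def H_def)
  hence q1: "1 \<le> q" using mult_nonneg_nonneg[OF \<eta>(1) \<epsilon>2] by linarith
  have "0 \<le> \<epsilon>1" using ytil_grad norm_ge_zero order_trans by blast
  hence \<Xi>0: "0 \<le> \<Xi>" using \<eta> a b L1 R by (simp add: \<Xi>_def)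
  define err where "err t = G (y t) - G (y' t) - H *v w t" for t
  have w_rec: "w (Suc t) = (w t - \<eta> *\<^sub>R (H *v w t)) - \<eta> *\<^sub>R err t" for t
    by (simp add: w_def err_def y_iter y'_iter algebra_simps)
  have err: "\<eta> * norm (err t) \<le> \<epsilon> * norm (w t) + \<Xi>" if "t \<le> M" for t
    using mult_left_mono[OF inexact_gradient_difference_linearization
        [OF hess hess_lip L2 grad_lip _ inexact a ytil_grad _ R(2) near(1)[OF that] near(2)[OF that]] \<eta>(1)]
      L1 R by (simp add: err_def w_def H_def \<epsilon>_def \<Xi>_def algebra_simps)
  have e0_H: "e0 \<bullet> (H *v v) = lambda_min H * (e0 \<bullet> v)" for v
    using H_sym[of v e0] e0(2) by (simp add: inner_commute H_def)
  have "(1 + \<eta> * \<epsilon>2)^M \<le> q^M" using q \<eta> \<epsilon>2 by (intro power_mono) auto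
  hence "1/3 * (1 + \<eta> * \<epsilon>2)^M * U \<le> 1/3 * q^M * U" using U by simp
  also have "\<dots> \<le> e0 \<bullet> w M"
  proof (rule coupled_difference_growth[where \<epsilon> = \<epsilon> and \<Xi> = \<Xi>])
    fix t assume "t < M"
    have "norm (w (Suc t)) \<le> norm (w t - \<eta> *\<^sub>R (H *v w t)) + \<eta> * norm (err t)"
      using norm_triangle_ineq4[of "w t - \<eta> *\<^sub>R (H *v w t)" "\<eta> *\<^sub>R err t"] \<eta>(1) by (simp add: w_rec)
    thus "norm (w (Suc t)) \<le> (q + \<epsilon>) * norm (w t) + \<Xi>"
      using expand[of "w t"] err[of t] \<open>t < M\<close> distrib_right[of q \<epsilon> "norm (w t)"] by linarith
    have "e0 \<bullet> w (Suc t) = q * (e0 \<bullet> w t) - \<eta> * (e0 \<bullet> err t)"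
      by (simp add: w_rec inner_diff_right e0_H q_def algebra_simps)
    moreover have "e0 \<bullet> err t \<le> norm (err t)" using norm_cauchy_schwarz[of e0 "err t"] e0 by simp
    hence "\<eta> * (e0 \<bullet> err t) \<le> \<epsilon> * norm (w t) + \<Xi>"
      using mult_left_mono[of "e0 \<bullet> err t" "norm (err t)" \<eta>] err[of t] \<open>t < M\<close> \<eta> by linarith
    ultimately show "q * (e0 \<bullet> w t) - \<epsilon> * norm (w t) - \<Xi> \<le> e0 \<bullet> w (Suc t)" by linarith
  next
    show "real M * \<epsilon> \<le> 1/4" "real M * \<Xi> \<le> 3/16 * U"
      using curvature errors by (simp_all add: \<epsilon>_def \<Xi>_def algebra_simps)
  qed (use e0 q1 \<Xi>0 \<eta> L2 R U in \<open>auto simp: w_def y0 \<epsilon>_def\<close>)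
  finally show ?thesis by (simp add: w_def)
qed

lemma saddle_escape:
  fixes g :: "real^'n \<Rightarrow> real" and grad G :: "real^'n \<Rightarrow> real^'n" and hess :: "real^'n \<Rightarrow> real^'n^'n"
    and y y' :: "nat \<Rightarrow> real^'n"
  assumes grad: "\<And>x. (g has_derivative (\<lambda>h. grad x \<bullet> h)) (at x)"
    and grad_lip: "\<And>x z. norm (grad x - grad z) \<le> L1 * norm (x - z)" and L1: "L1 > 0"
    and hess: "\<And>z. z \<in> cball ytil \<beta> \<Longrightarrow> (grad has_derivative (\<lambda>h. hess z *v h)) (at z within cball ytil \<beta>)"
    and hess_lip: "\<And>z. z \<in> cball ytil \<beta> \<Longrightarrow> onorm (\<lambda>h. (hess z - hess ytil) *v h) \<le> L2 * norm (z - ytil)"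
    and L2: "L2 \<ge> 0"
    and inexact: "\<And>x. norm (grad x - G x) \<le> a * norm (grad x) + b"
    and a: "0 \<le> a" "a \<le> 1/20" and b: "0 \<le> b" and \<eta>: "\<eta> = (1 - a) / ((1 + a)^2 * L1)"
    and ytil_grad: "norm (grad ytil) \<le> \<epsilon>1"
    and e0: "norm e0 = 1" "hess ytil *v e0 = lambda_min (hess ytil) *\<^sub>R e0"
    and lam: "lambda_min (hess ytil) \<le> - \<epsilon>2" and \<epsilon>2: "0 \<le> \<epsilon>2"
    and y_iter: "\<And>t. y (Suc t) = y t - \<eta> *\<^sub>R G (y t)"
    and y'_iter: "\<And>t. y' (Suc t) = y' t - \<eta> *\<^sub>R G (y' t)"
    and y0: "y 0 = y' 0 + U *\<^sub>R e0"
    and start: "norm (y 0 - ytil) \<le> 8/25 * R" "norm (y' 0 - ytil) \<le> 8/25 * R"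
    and R: "0 < R" "R \<le> \<beta>" and M: "M > 0"
    and F: "F \<le> R^2 / (50 * (\<eta> * real M))" and bF: "b^2 \<le> F / (40 * (\<eta> * real M))"
    and Tb: "\<eta> * real M * b \<le> R / 4"
    and curvature: "\<eta> * real M * L2 * R \<le> 1/4"
    and errors: "2 * (\<eta> * real M) * (a * (\<epsilon>1 + L1 * R) + b) \<le> 3/16 * U"
    and growth: "6 * R < (1 + \<eta> * \<epsilon>2)^M * U"
  shows "min (g (y M) - g (y 0)) (g (y' M) - g (y' 0)) \<le> - F"
proof (rule ccontr)
  assume "\<not> ?thesis"
  hence small_decrease: "g (y M) - g (y 0) > - F" "g (y' M) - g (y' 0) > - F" by auto
  have "a < 1" using a by simp
  note \<eta>_bounds = inexact_step_size_bounds[OF a(1) this L1 \<eta>]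
  have near: "z t \<in> cball ytil R"
    if "\<And>t. z (Suc t) = z t - \<eta> *\<^sub>R G (z t)" "g (z M) - g (z 0) > - F"
      "norm (z 0 - ytil) \<le> 8/25 * R" "t \<le> M" for z t
  proof -
    have "norm (z t - z 0) \<le> 17/25 * R"
      by (rule inexact_gradient_descent_localizes[OF grad grad_lip L1 inexact a b \<eta> that(1,2) M R(1) F bF Tb that(4)])
    thus ?thesis using norm_triangle_ineq[of "z t - z 0" "z 0 - ytil"] that(3)
      by (simp add: dist_norm norm_minus_commute)
  qed
  have U: "U > 0"
  proof (rule ccontr)
    assume "\<not> U > 0"
    moreover have "0 \<le> (1 + \<eta> * \<epsilon>2)^M" using mult_nonneg_nonneg[of \<eta> \<epsilon>2] \<eta>_bounds \<epsilon>2 by simp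
    ultimately have "(1 + \<eta> * \<epsilon>2)^M * U \<le> 0" by (simp add: mult_nonneg_nonpos)
    thus False using growth R by linarith
  qed
  have "1/3 * (1 + \<eta> * \<epsilon>2)^M * U \<le> e0 \<bullet> (y M - y' M)"
    by (rule coupled_runs_diverge[OF grad grad_lip L1 hess hess_lip L2 inexact a(1) b ytil_grad e0 lam \<epsilon>2
          less_imp_le[OF \<eta>_bounds(1)] \<eta>_bounds(2) y_iter y'_iter y0 U near[OF y_iter small_decrease(1) start(1)]
          near[OF y'_iter small_decrease(2) start(2)] R curvature errors])
  also have "\<dots> \<le> norm (y M - y' M)" using norm_cauchy_schwarz[of e0 "y M - y' M"] e0 by simp
  also have "\<dots> \<le> norm (y M - ytil) + norm (y' M - ytil)"
    using norm_triangle_ineq4[of "y M - ytil" "y' M - ytil"] by simp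
  also have "\<dots> \<le> 2 * R"
    using near[OF y_iter small_decrease(1) start(1), of M] near[OF y'_iter small_decrease(2) start(2), of M]
    by (simp add: dist_norm norm_minus_commute)
  finally show False using growth R by simp
qed

section \<open>The constants of the theorem\<close>

lemma two_powr_le_one_plus_power:
  assumes "0 \<le> x" "x \<le> 1"
  shows "2 powr (x * real n) \<le> (1 + x)^n"
proof -
  have "exp ((1 - x) * 0 + x * ln 2) \<le> (1 - x) * exp 0 + x * exp (ln 2)"
    using convex_onD[OF exp_convex, of x 0 "ln 2"] assms by simp
  hence "2 powr x \<le> 1 + x" by (simp add: powr_def mult.commute)
  hence "(2 powr x)^n \<le> (1 + x)^n" by (intro power_mono) auto
  thus ?thesis by (simp add: powr_powr[symmetric] powr_realpow)
qed

lemma escape_exponent_ge_one: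
  assumes \<phi>: "\<phi> = 2^24 * max 1 (5 * (L2 * \<epsilon>1) / (L1 * \<epsilon>2)) * (L1^2 / \<delta>) * sqrt d
      * (\<Delta>g * max (L2^2 / \<epsilon>2^5) (1 / (\<epsilon>1^2 * \<epsilon>2)) + 1 / \<epsilon>2^2)"
    and \<gamma>: "\<gamma> = log 2 (\<phi> * (log 2 \<phi>)^8)"
    and d: "1 \<le> d" and \<delta>: "0 < \<delta>" "\<delta> < 1" and \<Delta>g: "0 < \<Delta>g" and \<epsilon>2: "0 < \<epsilon>2" "\<epsilon>2 < L1"
  shows "1 \<le> \<gamma>"
proof -
  define X where "X = \<Delta>g * max (L2^2 / \<epsilon>2^5) (1 / (\<epsilon>1^2 * \<epsilon>2)) + 1 / \<epsilon>2^2"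
  have "0 \<le> max (L2^2 / \<epsilon>2^5) (1 / (\<epsilon>1^2 * \<epsilon>2))" using \<epsilon>2 by (simp add: le_max_iff_disj)
  hence X: "1 / \<epsilon>2^2 \<le> X" using \<Delta>g by (simp add: X_def)
  have "1 \<le> L1^2 * (1 / \<epsilon>2^2)" using \<epsilon>2 by (simp add: field_simps power_strict_mono less_imp_le)
  also have "\<dots> \<le> (L1^2 / \<delta>) * (1 / \<epsilon>2^2)"
    using \<delta> by (intro mult_right_mono) (simp_all add: le_divide_eq mult_left_le)
  also have "\<dots> \<le> (L1^2 / \<delta>) * X" using X \<delta> by (intro mult_left_mono) auto
  finally have "1 \<le> (L1^2 / \<delta>) * X" .
  hence "2^24 * 1 * 1 * 1 \<le> 2^24 * max 1 (5 * (L2 * \<epsilon>1) / (L1 * \<epsilon>2)) * sqrt d * ((L1^2 / \<delta>) * X)"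
    using d by (intro mult_mono) auto
  hence \<phi>2: "2 \<le> \<phi>" unfolding \<phi> X_def by (simp only: mult_ac) simp
  hence "1 \<le> (log 2 \<phi>)^8" by simp
  hence "2 * 1 \<le> \<phi> * (log 2 \<phi>)^8" using \<phi>2 by (intro mult_mono) auto
  thus ?thesis unfolding \<gamma> by simp
qed

lemma escape_horizon:
  fixes a L1 \<eta> \<gamma> \<epsilon>2 :: real
  assumes \<eta>: "\<eta> = (1 - a) / ((1 + a)^2 * L1)" and M: "real M = (1 + a)^2 / (1 - a) * (L1 * \<gamma> / \<epsilon>2)"
    and a: "0 \<le> a" "a < 1" and L1: "0 < L1"
  shows "\<eta> * real M = \<gamma> / \<epsilon>2"
proof -
  have "(u / (s * l)) * (s / u * (l * c / e)) = c / e" if "u \<noteq> 0" "s \<noteq> 0" "l \<noteq> 0" for u s l c e :: real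
    using that by (simp add: field_simps)
  thus ?thesis unfolding \<eta> M using a L1 by simp
qed

lemma escape_start_radius:
  fixes R r \<eta> \<gamma> \<epsilon>1 \<epsilon>2 L1 L2 :: real
  assumes R: "R = \<epsilon>2 / (4 * \<gamma> * L2)"
    and r: "r = \<epsilon>2^2 / (400 * L2 * \<gamma>^3) * min 1 (L1 * \<epsilon>2 / (5 * \<epsilon>1 * L2))"
    and \<eta>: "0 < \<eta>" "\<eta> * L1 \<le> 1" and \<gamma>: "1 \<le> \<gamma>" and \<epsilon>2: "0 < \<epsilon>2" "\<epsilon>2 < L1"
    and L2: "0 < L2" and \<epsilon>1: "0 < \<epsilon>1"
  shows "\<eta> * r \<le> R / 100"
proof -
  define m where "m = min 1 (L1 * \<epsilon>2 / (5 * \<epsilon>1 * L2))"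
  have m: "m \<le> 1" "0 \<le> m" using L2 \<epsilon>1 \<epsilon>2 by (auto simp: m_def)
  have c: "0 \<le> \<epsilon>2^2 / (400 * L2 * \<gamma>^3)" using L2 \<gamma> by simp
  have "r \<le> \<epsilon>2^2 / (400 * L2 * \<gamma>^3)" unfolding r m_def[symmetric] using mult_left_mono[OF m(1) c] by simp
  moreover have "0 \<le> r" unfolding r m_def[symmetric] using c m(2) by (rule mult_nonneg_nonneg)
  moreover have "\<eta> \<le> 1 / L1" using \<eta> \<epsilon>2 by (simp add: field_simps)
  ultimately have "\<eta> * r \<le> 1 / L1 * (\<epsilon>2^2 / (400 * L2 * \<gamma>^3))" using \<eta> \<epsilon>2 by (intro mult_mono) auto
  also have "\<dots> = (R / 100) * (\<epsilon>2 / (L1 * \<gamma>^2))"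
    using \<gamma> L2 \<epsilon>2 by (simp add: R field_simps power2_eq_square power3_eq_cube)
  also have "\<dots> \<le> R / 100"
  proof -
    have "1 \<le> \<gamma>^2" using \<gamma> by (rule one_le_power)
    hence "L1 \<le> L1 * \<gamma>^2" using \<epsilon>2 mult_left_mono[of 1 "\<gamma>^2" L1] by simp
    hence "\<epsilon>2 \<le> L1 * \<gamma>^2" using \<epsilon>2 by linarith
    hence "\<epsilon>2 / (L1 * \<gamma>^2) \<le> 1" using \<epsilon>2 \<gamma> by simp
    moreover have "0 \<le> R" using \<epsilon>2 \<gamma> L2 by (simp add: R)
    ultimately show ?thesis using mult_left_le[of "\<epsilon>2 / (L1 * \<gamma>^2)" "R / 100"] by simp
  qed
  finally show ?thesis .
qed

lemma escape_growth:
  fixes \<eta> \<epsilon>2 L1 \<gamma> :: real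
  assumes \<eta>: "0 < \<eta>" "\<eta> * L1 \<le> 1" and \<epsilon>2: "0 < \<epsilon>2" "\<epsilon>2 < L1" and T: "\<eta> * real M = \<gamma> / \<epsilon>2"
  shows "2 powr \<gamma> \<le> (1 + \<eta> * \<epsilon>2)^M"
proof -
  have "\<eta> * \<epsilon>2 \<le> \<eta> * L1" using \<eta> \<epsilon>2 by (intro mult_left_mono) auto
  hence "\<eta> * \<epsilon>2 \<le> 1" using \<eta> by linarith
  hence "2 powr (\<eta> * \<epsilon>2 * real M) \<le> (1 + \<eta> * \<epsilon>2)^M"
    using \<eta> \<epsilon>2 by (intro two_powr_le_one_plus_power) auto
  moreover have "\<eta> * \<epsilon>2 * real M = \<gamma>" using T \<epsilon>2 by (simp add: field_simps)
  ultimately show ?thesis by simp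
qed

lemma escape_constants_admissible:
  assumes L1: "0 < L1" and L2: "0 < L2" and a: "0 \<le> a" and b: "0 \<le> b" and \<epsilon>1: "0 < \<epsilon>1"
    and \<gamma>: "1 \<le> \<gamma>" and \<epsilon>2: "0 < \<epsilon>2" "\<epsilon>2 < L1" and \<beta>: "\<epsilon>2 < 4 * \<gamma> * \<beta> * L2"
    and F_def: "F = 1 / (800 * \<gamma>^3) * ((1 - a) / (1 + a)^2) * (\<epsilon>2^3 / L2^2)"
    and R_def: "R = \<epsilon>2 / (4 * \<gamma> * L2)"
    and \<eta>: "0 < \<eta>" "\<eta> * L1 \<le> 1" and T: "\<eta> * real M = \<gamma> / \<epsilon>2"
    and a_bound: "a \<le> min (1/20) (min (1 / (L1 * \<eta> * real M * 2 powr (\<gamma> + 2)))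
                                   (R / (\<epsilon>1 * \<eta> * real M * 2 powr (\<gamma> + 2))))"
    and b_bound: "b \<le> min (\<epsilon>1 / 64) (min (sqrt (F / (40 * \<eta> * real M)))
                     (min (sqrt (L1 * F / (real M * (5 * L1 + 1)))) (R / (real M * \<eta> * 2 powr (\<gamma> + 2)))))"
    and r0: "\<eta> * r0 \<ge> 2 powr (3 - \<gamma>) * R"
  shows "0 < R" "R \<le> \<beta>" "F \<le> R^2 / (50 * (\<eta> * real M))" "b^2 \<le> F / (40 * (\<eta> * real M))"
    "\<eta> * real M * b \<le> R / 4" "\<eta> * real M * L2 * R \<le> 1/4"
    "2 * (\<eta> * real M) * (a * (\<epsilon>1 + L1 * R) + b) \<le> 3/16 * (\<eta> * r0)"
    "6 * R < (1 + \<eta> * \<epsilon>2)^M * (\<eta> * r0)"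
proof -
  define P where "P = 2 powr \<gamma>"
  define T where "T = \<eta> * real M"
  have T0: "0 < T" using T \<gamma> \<epsilon>2 by (simp add: T_def)
  have P: "2 \<le> P" using powr_mono[of 1 \<gamma> 2] \<gamma> by (simp add: P_def)
  have P4: "2 powr (\<gamma> + 2) = 4 * P" by (simp add: P_def powr_add)
  have "a \<le> 1 / (L1 * \<eta> * real M * 2 powr (\<gamma> + 2))" "a \<le> R / (\<epsilon>1 * \<eta> * real M * 2 powr (\<gamma> + 2))"
    using a_bound by simp_all
  moreover have "b \<le> sqrt (F / (40 * \<eta> * real M))" "b \<le> R / (real M * \<eta> * 2 powr (\<gamma> + 2))"
    using b_bound by simp_all
  ultimately have a_bounds: "a \<le> 1 / (L1 * T * (4 * P))" "a \<le> R / (\<epsilon>1 * T * (4 * P))"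
    and b_bounds: "b \<le> sqrt (F / (40 * T))" "b \<le> R / (T * (4 * P))"
    by (simp_all add: T_def P4 mult_ac)
  show R: "0 < R" using \<gamma> \<epsilon>2 L2 by (simp add: R_def)
  have "0 < 4 * \<gamma> * L2" using \<gamma> L2 by simp
  thus "R \<le> \<beta>" using \<beta> by (simp add: R_def pos_divide_le_eq mult_ac)
  have "1 - a \<le> (1 + a)^2" using a by (simp add: power2_eq_square algebra_simps)
  hence "F \<le> 1 / (800 * \<gamma>^3) * 1 * (\<epsilon>2^3 / L2^2)" unfolding F_def
    using a \<gamma> \<epsilon>2 L2 by (intro mult_right_mono mult_left_mono) auto
  also have "\<dots> = R^2 / (50 * T)"
    using \<gamma> \<epsilon>2 L2 by (simp add: T_def T R_def field_simps power2_eq_square power3_eq_cube)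
  finally show "F \<le> R^2 / (50 * (\<eta> * real M))" by (simp add: T_def)
  have "0 \<le> F" unfolding F_def using a_bound \<gamma> \<epsilon>2 L2 by simp
  hence "(sqrt (F / (40 * T)))^2 = F / (40 * T)" using T0 by simp
  moreover have "b^2 \<le> (sqrt (F / (40 * T)))^2" by (rule power_mono[OF b_bounds(1) b])
  ultimately show "b^2 \<le> F / (40 * (\<eta> * real M))" by (simp add: T_def)
  have Tb: "T * b \<le> R / (4 * P)" using b_bounds(2) T0 P by (simp add: field_simps)
  also have "\<dots> \<le> R / 4" using R P by (simp add: field_simps)
  finally show "\<eta> * real M * b \<le> R / 4" by (simp add: T_def)
  show "\<eta> * real M * L2 * R \<le> 1/4" using \<gamma> \<epsilon>2 L2 by (simp add: T R_def field_simps)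
  have TaL: "T * a * L1 \<le> 1 / (4 * P)" using a_bounds(1) T0 P L1 by (simp add: field_simps)
  have Tae: "T * a * \<epsilon>1 \<le> R / (4 * P)" using a_bounds(2) T0 P \<epsilon>1 by (simp add: field_simps)
  have U: "8 * R / P \<le> \<eta> * r0" using r0 by (simp add: P_def powr_diff powr_numeral)
  have "2 * T * (a * (\<epsilon>1 + L1 * R) + b) = 2 * (T * a * \<epsilon>1 + (T * a * L1) * R + T * b)"
    by (simp add: algebra_simps)
  also have "\<dots> \<le> 2 * (R / (4 * P) + 1 / (4 * P) * R + R / (4 * P))"
    using Tae TaL Tb R by (intro mult_left_mono add_mono mult_right_mono) auto
  also have "\<dots> = 3/16 * (8 * R / P)" using P by (simp add: field_simps)
  also have "\<dots> \<le> 3/16 * (\<eta> * r0)" using U by simp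
  finally show "2 * (\<eta> * real M) * (a * (\<epsilon>1 + L1 * R) + b) \<le> 3/16 * (\<eta> * r0)" by (simp add: T_def)
  have "P \<le> (1 + \<eta> * \<epsilon>2)^M" unfolding P_def by (rule escape_growth[OF \<eta> \<epsilon>2 T])
  hence "P * (8 * R / P) \<le> (1 + \<eta> * \<epsilon>2)^M * (\<eta> * r0)" using U P R by (intro mult_mono) auto
  thus "6 * R < (1 + \<eta> * \<epsilon>2)^M * (\<eta> * r0)" using P R by simp
qed

theorem mainTheorem4:
  fixes g :: "real^'n \<Rightarrow> real"
    and grad :: "real^'n \<Rightarrow> real^'n"
    and hess :: "real^'n \<Rightarrow> real^'n^'n"
    and G :: "real^'n \<Rightarrow> real^'n"
    and L1 L2 \<alpha> \<beta> a b \<Delta>g \<delta> \<epsilon>1 \<epsilon>2 :: real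
    and x0 :: "real^'n"
    and \<phi> \<gamma> F R \<eta> r \<omega> r0 :: real
    and M :: nat
    and ytil e0 :: "real^'n"
    and y y' :: "nat \<Rightarrow> real^'n"
  assumes bdd_below: "\<exists>c. \<forall>x. c \<le> g x"
    and grad: "\<And>x. (g has_derivative (\<lambda>h. grad x \<bullet> h)) (at x)"
    and L1_pos: "L1 > 0"
    and grad_lip: "\<And>x z. norm (grad x - grad z) \<le> L1 * norm (x - z)"
    and \<alpha>_pos: "\<alpha> > 0" and \<beta>_pos: "\<beta> > 0" and L2_pos: "L2 > 0"
    and loc_C2: "\<And>xb. norm (grad xb) \<le> \<alpha> \<Longrightarrow>
        (\<forall>z\<in>cball xb \<beta>. (grad has_derivative (\<lambda>h. hess z *v h)) (at z within cball xb \<beta>))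
        \<and> continuous_on (cball xb \<beta>) hess
        \<and> (\<forall>z\<in>cball xb \<beta>. \<forall>w\<in>cball xb \<beta>.
              onorm (\<lambda>h. (hess z - hess w) *v h) \<le> L2 * norm (z - w))"
    and a_nonneg: "0 \<le> a" and b_nonneg: "0 \<le> b"
    and inexact_G: "\<And>x. norm (grad x - G x) \<le> a * norm (grad x) + b"
    and \<Delta>g_pos: "\<Delta>g > 0"
    and \<Delta>g_bound: "g x0 - (INF x. g x) \<le> \<Delta>g"
    and \<delta>_range: "0 < \<delta>" "\<delta> < 1"
    and \<epsilon>1_range: "0 < \<epsilon>1" "\<epsilon>1 < \<alpha>"
    and \<phi>_def: "\<phi> = 2^24 * max 1 (5 * (L2 * \<epsilon>1) / (L1 * \<epsilon>2)) * (L1^2 / \<delta>)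
          * sqrt (real CARD('n))
          * (\<Delta>g * max (L2^2 / \<epsilon>2^5) (1 / (\<epsilon>1^2 * \<epsilon>2)) + 1 / \<epsilon>2^2)"
    and \<gamma>_def: "\<gamma> = log 2 (\<phi> * (log 2 \<phi>)^8)"
    and F_def: "F = 1 / (800 * \<gamma>^3) * ((1 - a) / (1 + a)^2) * (\<epsilon>2^3 / L2^2)"
    and R_def: "R = \<epsilon>2 / (4 * \<gamma> * L2)"
    and \<eta>_def: "\<eta> = (1 - a) / ((1 + a)^2 * L1)"
    and r_def: "r = \<epsilon>2^2 / (400 * L2 * \<gamma>^3) * min 1 (L1 * \<epsilon>2 / (5 * \<epsilon>1 * L2))"
    and M_def: "real M = (1 + a)^2 / (1 - a) * (L1 * \<gamma> / \<epsilon>2)"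
    and M_pos: "M > 0"
    and \<epsilon>2_range: "0 < \<epsilon>2" "\<epsilon>2 < min (4 * \<gamma> * \<beta> * L2) (min L1 (L1^2))"
    and a_bound: "a \<le> min (1/20) (min (1 / (L1 * \<eta> * real M * 2 powr (\<gamma> + 2)))
                                   (R / (\<epsilon>1 * \<eta> * real M * 2 powr (\<gamma> + 2))))"
    and b_bound: "b \<le> min (\<epsilon>1 / 64) (min (sqrt (F / (40 * \<eta> * real M)))
                     (min (sqrt (L1 * F / (real M * (5 * L1 + 1)))) (R / (real M * \<eta> * 2 powr (\<gamma> + 2)))))"
    and ytil_grad: "norm (grad ytil) \<le> \<epsilon>1"
    and ytil_hess: "lambda_min (hess ytil) \<le> - \<epsilon>2"
    and e0_unit: "norm e0 = 1"
    and e0_eig: "hess ytil *v e0 = lambda_min (hess ytil) *\<^sub>R e0"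
    and \<omega>_def: "\<omega> = (1 / \<eta>) * 2 powr (3 - \<gamma>) * R"
    and r0_ge: "r0 \<ge> \<omega>"
    and y0_rel: "y 0 = y' 0 + (\<eta> * r0) *\<^sub>R e0"
    and y0_close: "max (norm (y 0 - ytil)) (norm (y' 0 - ytil)) \<le> \<eta> * r"
    and y_iter: "\<And>t. y (Suc t) = y t - \<eta> *\<^sub>R G (y t)"
    and y'_iter: "\<And>t. y' (Suc t) = y' t - \<eta> *\<^sub>R G (y' t)"
  shows "min (g (y M) - g (y 0)) (g (y' M) - g (y' 0)) \<le> - F"
proof -
  have a: "0 \<le> a" "a \<le> 1/20" and a1: "a < 1" using a_nonneg a_bound by simp_all
  note \<eta> = inexact_step_size_bounds[OF a_nonneg a1 L1_pos \<eta>_def]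
  have \<epsilon>2: "0 < \<epsilon>2" "\<epsilon>2 < L1" "\<epsilon>2 < 4 * \<gamma> * \<beta> * L2" using \<epsilon>2_range by simp_all
  have \<gamma>: "1 \<le> \<gamma>"
    by (rule escape_exponent_ge_one[OF \<phi>_def \<gamma>_def _ \<delta>_range \<Delta>g_pos \<epsilon>2(1,2)]) simp
  have "2 powr (3 - \<gamma>) * R \<le> \<eta> * r0" using r0_ge \<eta>(1) by (simp add: \<omega>_def field_simps)
  note constants = escape_constants_admissible[OF L1_pos L2_pos a_nonneg b_nonneg \<epsilon>1_range(1) \<gamma> \<epsilon>2(1,2)
      \<epsilon>2(3) F_def R_def \<eta> escape_horizon[OF \<eta>_def M_def a_nonneg a1 L1_pos] a_bound b_bound this]
  have "\<eta> * r \<le> R / 100"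
    by (rule escape_start_radius[OF R_def r_def \<eta> \<gamma> \<epsilon>2(1,2) L2_pos \<epsilon>1_range(1)])
  hence start: "norm (y 0 - ytil) \<le> 8/25 * R" "norm (y' 0 - ytil) \<le> 8/25 * R"
    using y0_close constants(1) by auto
  have "norm (grad ytil) \<le> \<alpha>" using ytil_grad \<epsilon>1_range by simp
  note C2 = loc_C2[OF this]
  have hess: "\<And>z. z \<in> cball ytil \<beta> \<Longrightarrow> (grad has_derivative (\<lambda>h. hess z *v h)) (at z within cball ytil \<beta>)"
    using C2 by blast
  have hess_lip: "\<And>z. z \<in> cball ytil \<beta> \<Longrightarrow> onorm (\<lambda>h. (hess z - hess ytil) *v h) \<le> L2 * norm (z - ytil)"
    using C2 \<beta>_pos by simp
  show ?thesis
    by (rule saddle_escape[OF grad grad_lip L1_pos hess hess_lip less_imp_le[OF L2_pos] inexact_G a b_nonneg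
          \<eta>_def ytil_grad e0_unit e0_eig ytil_hess less_imp_le[OF \<epsilon>2(1)] y_iter y'_iter y0_rel start
          constants(1,2) M_pos constants(3-)])
qed

end
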